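(* Let $0<\lambda<1$, $0<\beta<1$, and let $\mathcal{A}$ be the (not necessarily unital) associative subalgebra of $\operatorname{End}(\mathcal{B}'(\lambda,\beta))\cong M_4(\mathbb{R})$ generated by the left multiplication operators $l_o,l_a,l_b$. Then: 1. if $\lambda=\beta=\tfrac12$, then $\mathcal{A}=M_0$; 2. if $\lambda\neq\beta$ and $\lambda=1-\beta$, then $\mathcal{A}=M_1$; 3. if $\lambda=\beta$ and $\lambda\neq1-\beta$, then $\mathcal{A}=M_2$; 4. if $\lambda\neq\beta$ and $\lambda\neq1-\beta$, then $\mathcal{A}=M_3$.
   Context: For real parameters $0<\lambda<1$ and $0<\beta<1$, $\mathcal{B}'(\lambda,\beta)$ denotes the commutative (non-associative) $4$-dimensional real algebra with basis $\{o,a,b,c\}$ whose bilinear commutative multiplication $\circ$ is determined by $o\circ o=o$, $o\circ a=\lambda a$, $o\circ b=\lambda b$, $a\circ a=a$, $b\circ b=b$, $a\circ b=\frac{\lambda-\beta}{\lambda}a+\frac{\lambda+\beta-1}{\lambda}b+c$, and $c\circ x=x\circ c=0$ for every $x$. (In the paper the basis vector $c$ is written $ab$.) For $x$ in the algebra, $l_x(y)=x\circ y$; operators are identified with $4\times4$ real matrices with respect to the ordered basis $(o,a,b,c)$, the $j$-th column being the coordinate vector of the image of the $j$-th basis vector. Thus $l_o=E_{11}+\lambda E_{22}+\lambda E_{33}$, $l_a=\lambda E_{21}+E_{22}+\frac{\lambda-\beta}{\lambda}E_{23}+\frac{\lambda+\beta-1}{\lambda}E_{33}+E_{43}$, $l_b=\frac{\lambda-\beta}{\lambda}E_{22}+\lambda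 E_{31}+\frac{\lambda+\beta-1}{\lambda}E_{32}+E_{33}+E_{42}$, where $E_{ij}$ are matrix units. Define the subspaces of $M_4(\mathbb{R})$: $M_0=\operatorname{span}\{E_{11},E_{21},E_{22},E_{31},E_{33},E_{41},E_{42},E_{43}\}$, $M_1=M_0+\mathbb{R}E_{23}$, $M_2=M_0+\mathbb{R}E_{32}$, $M_3=M_0+\mathbb{R}E_{23}+\mathbb{R}E_{32}$. *)

theory Defs
  imports "HOL-Analysis.Analysis" "HOL-Library.Numeral_Type"
begin

text \<open>4x4 real matrices; rows/columns indexed by the type 4, with basis order (o,a,b,c)
  corresponding to indices 1,2,3,4 (note: in type 4 the numeral 4 equals 0; the four
  indices 1,2,3,4 are pairwise distinct and exhaust the type).\<close>

type_synonym mat4 = "real ^ 4 ^ 4"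

definition E :: "4 \<Rightarrow> 4 \<Rightarrow> mat4" where
  "E i j = (\<chi> r c. if r = i \<and> c = j then 1 else 0)"

definition gen_alg :: "mat4 set \<Rightarrow> mat4 set" where
  "gen_alg S = \<Inter>{A. S \<subseteq> A \<and> subspace A \<and> (\<forall>x\<in>A. \<forall>y\<in>A. x ** y \<in> A)}"

definition l_o :: "real \<Rightarrow> real \<Rightarrow> mat4" where
  "l_o lam bet = E 1 1 + lam *\<^sub>R E 2 2 + lam *\<^sub>R E 3 3"

definition l_a :: "real \<Rightarrow> real \<Rightarrow> mat4" where
  "l_a lam bet = lam *\<^sub>R E 2 1 + E 2 2 + ((lam - bet) / lam) *\<^sub>R E 2 3
     + ((lam + bet - 1) / lam) *\<^sub>R E 3 3 + E 4 3"

definition l_b :: "real \<Rightarrow> real \<Rightarrow> mat4" where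
  "l_b lam bet = ((lam - bet) / lam) *\<^sub>R E 2 2 + lam *\<^sub>R E 3 1
     + ((lam + bet - 1) / lam) *\<^sub>R E 3 2 + E 3 3 + E 4 2"

definition M0 :: "mat4 set" where
  "M0 = span {E 1 1, E 2 1, E 2 2, E 3 1, E 3 3, E 4 1, E 4 2, E 4 3}"

definition M1 :: "mat4 set" where
  "M1 = span {E 1 1, E 2 1, E 2 2, E 3 1, E 3 3, E 4 1, E 4 2, E 4 3, E 2 3}"

definition M2 :: "mat4 set" where
  "M2 = span {E 1 1, E 2 1, E 2 2, E 3 1, E 3 3, E 4 1, E 4 2, E 4 3, E 3 2}"

definition M3 :: "mat4 set" where
  "M3 = span {E 1 1, E 2 1, E 2 2, E 3 1, E 3 3, E 4 1, E 4 2, E 4 3, E 2 3, E 3 2}"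

end

theory Submission
  imports Defs
begin

(* The algebra generated by l_o, l_a, l_b is computed by exhibiting a basis of matrix
   units.  Writing p = (lam - bet)/lam and q = (lam + bet - 1)/lam, the generators are
     l_o = E11 + lam E22 + lam E33,
     l_a = lam E21 + E22 + p E23 + q E33 + E43,
     l_b = p E22 + lam E31 + q E32 + E33 + E42.
   (1) Any subalgebra containing them contains the eight "outer" units E11, E21, E22,
       E31, E33, E41, E42, E43, and moreover E23 if p \<noteq> 0 and E32 if q \<noteq> 0; this uses
       only lam \<notin> {0,1} and p + q \<noteq> 1 (Lemmas outer_units_mem, middle_units_mem).
   (2) Conversely the span of these units contains the generators and is closed under
       multiplication (products of matrix units are matrix units or zero), so it is a
       subalgebra (Lemmas span_mat_algebra, generators_in_span_units, units_mult_closed).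
   Hence the generated algebra is exactly this span (gen_alg_generators).  The theorem
   follows since p = 0 iff lam = bet, q = 0 iff lam = 1 - bet, and p + q \<noteq> 1 always. *)

definition mat_algebra :: "(real ^ 'n ^ 'n) set \<Rightarrow> bool" where
  "mat_algebra G \<longleftrightarrow> subspace G \<and> (\<forall>x\<in>G. \<forall>y\<in>G. x ** y \<in> G)"

lemma mat_algebraD:
  assumes "mat_algebra G"
  shows "subspace G" and "x \<in> G \<Longrightarrow> y \<in> G \<Longrightarrow> x ** y \<in> G"
  using assms unfolding mat_algebra_def by blast+

lemma gen_alg_superset: "S \<subseteq> gen_alg S"
  unfolding gen_alg_def by blast

lemma gen_alg_mat_algebra: "mat_algebra (gen_alg S)"
  unfolding gen_alg_def mat_algebra_def by (auto intro: subspace_Inter)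

lemma gen_alg_least: "S \<subseteq> A \<Longrightarrow> mat_algebra A \<Longrightarrow> gen_alg S \<subseteq> A"
  unfolding gen_alg_def mat_algebra_def by blast

text \<open>Right distributivity of the matrix product (the library has the left one).\<close>

lemma matrix_add_rdistrib:
  fixes A B :: "'a::semiring_1 ^ 'n ^ 'm"
  shows "(A + B) ** C = A ** C + B ** C"
  by (simp add: matrix_matrix_mult_def vec_eq_iff sum.distrib distrib_right)

text \<open>Bilinearity of the matrix product: the span of a set whose pairwise products lie
  in the span is itself closed under products.\<close>

lemma span_mat_algebra:
  fixes B :: "(real ^ 'n ^ 'n) set"
  assumes B: "\<And>b c. b \<in> B \<Longrightarrow> c \<in> B \<Longrightarrow> b ** c \<in> span B"
  shows "mat_algebra (span B)"
proof -
  have "x ** y \<in> span B" if x: "x \<in> span B" and y: "y \<in> span B" for x y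
  proof -
    have "\<forall>y\<in>span B. x ** y \<in> span B" using x
    proof (induction rule: span_induct)
      case base
      show ?case unfolding subspace_def
        by (simp add: matrix_add_rdistrib scalar_matrix_assoc[symmetric]
            span_add span_scale span_zero)
    next
      case (step b)
      show ?case
      proof
        fix y assume "y \<in> span B"
        then show "b ** y \<in> span B"
        proof (induction rule: span_induct)
          case base
          show ?case unfolding subspace_def
            by (simp add: matrix_add_ldistrib matrix_scalar_ac scalar_matrix_assoc[symmetric]
                span_add span_scale span_zero)
        next
          case (step c)
          then show ?case using B \<open>b \<in> B\<close> by blast
        qed
      qed
    qed
    then show ?thesis using y by blast
  qed
  then show ?thesis unfolding mat_algebra_def by (simp add: subspace_span)
qed

lemma gen_alg_eq_span:
  fixes B :: "mat4 set"
  assumes "B \<subseteq> gen_alg S" and "S \<subseteq> span B"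
    and "\<And>b c. b \<in> B \<Longrightarrow> c \<in> B \<Longrightarrow> b ** c \<in> span B"
  shows "gen_alg S = span B"
proof
  show "gen_alg S \<subseteq> span B"
    by (rule gen_alg_least[OF assms(2) span_mat_algebra]) (rule assms(3))
  show "span B \<subseteq> gen_alg S"
    by (rule span_minimal[OF assms(1) mat_algebraD(1)[OF gen_alg_mat_algebra]])
qed

lemma subspace_scale_cancel:
  assumes "subspace G" and "c \<noteq> 0" and "c *\<^sub>R x = y" and "y \<in> G"
  shows "x \<in> G"
proof -
  have "x = (1 / c) *\<^sub>R y" using assms(2,3) by auto
  then show ?thesis using assms(1,4) by (simp add: subspace_scale)
qed

lemma E_entry: "E i j $ r $ c = (if r = i \<and> c = j then 1 else 0)"
  by (simp add: E_def)

lemma sum_UNIV_4: "sum f (UNIV :: 4 set) = f 1 + f 2 + f 3 + f 4"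
  unfolding UNIV_4 by (simp add: ac_simps)

lemmas mat4_entry_simps = vec_eq_iff forall_4 matrix_matrix_mult_def sum_UNIV_4 E_entry

lemma E_mult: "E i j ** E k l = (if j = k then E i l else 0)"
proof -
  have "(\<Sum>m\<in>UNIV. (if r = i \<and> m = j then 1 else 0) * (if m = k \<and> c = l then 1 else 0))
      = (if j = k \<and> r = i \<and> c = l then 1 else (0::real))" for r c
  proof -
    have "(\<Sum>m\<in>UNIV. (if r = i \<and> m = j then 1 else 0) * (if m = k \<and> c = l then 1 else 0))
        = (\<Sum>m\<in>UNIV. if m = j then (if r = i \<and> j = k \<and> c = l then 1 else 0) else (0::real))"
      by (rule sum.cong) auto
    also have "\<dots> = (if j = k \<and> r = i \<and> c = l then 1 else 0)"
      by (simp add: sum.delta)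
    finally show ?thesis .
  qed
  then show ?thesis by (auto simp: vec_eq_iff matrix_matrix_mult_def E_def)
qed

text \<open>The left multiplications, with the coefficients p = (lam - bet)/lam and
  q = (lam + bet - 1)/lam treated as independent parameters.\<close>

definition gen_o :: "real \<Rightarrow> mat4" where
  "gen_o lam = E 1 1 + lam *\<^sub>R E 2 2 + lam *\<^sub>R E 3 3"

definition gen_a :: "real \<Rightarrow> real \<Rightarrow> real \<Rightarrow> mat4" where
  "gen_a lam p q = lam *\<^sub>R E 2 1 + E 2 2 + p *\<^sub>R E 2 3 + q *\<^sub>R E 3 3 + E 4 3"

definition gen_b :: "real \<Rightarrow> real \<Rightarrow> real \<Rightarrow> mat4" where
  "gen_b lam p q = p *\<^sub>R E 2 2 + lam *\<^sub>R E 3 1 + q *\<^sub>R E 3 2 + E 3 3 + E 4 2"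

definition outer_units :: "mat4 set" where
  "outer_units = {E 1 1, E 2 1, E 2 2, E 3 1, E 3 3, E 4 1, E 4 2, E 4 3}"

definition units :: "real \<Rightarrow> real \<Rightarrow> mat4 set" where
  "units p q = outer_units \<union> (if p = 0 then {} else {E 2 3}) \<union> (if q = 0 then {} else {E 3 2})"

text \<open>The projection E11
  comes from l_o^2 - lam l_o; then D = E22 + E33, the first column and the last row follow,
  and compressing l_a, l_b by D leaves the middle 2x2 blocks u and v.\<close>

lemma outer_units_mem:
  assumes alg: "mat_algebra G"
    and gens: "gen_o lam \<in> G" "gen_a lam p q \<in> G" "gen_b lam p q \<in> G"
    and lam: "lam \<noteq> 0" "lam \<noteq> 1"
  shows "E 1 1 \<in> G" "E 2 1 \<in> G" "E 3 1 \<in> G" "E 4 1 \<in> G" "E 4 2 \<in> G" "E 4 3 \<in> G"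
    and "E 2 2 + E 3 3 \<in> G"
    and "(1 - q) *\<^sub>R E 2 2 + p *\<^sub>R E 2 3 \<in> G"
    and "q *\<^sub>R E 3 2 + (1 - p) *\<^sub>R E 3 3 \<in> G"
proof -
  note sub = mat_algebraD(1)[OF alg] and mul = mat_algebraD(2)[OF alg]
  note closure = subspace_scale subspace_diff mul sub gens
  let ?LO = "gen_o lam" and ?LA = "gen_a lam p q" and ?LB = "gen_b lam p q"
  have "1 - lam \<noteq> 0" using lam by simp
  show e11: "E 1 1 \<in> G"
    by (rule subspace_scale_cancel[OF sub \<open>1 - lam \<noteq> 0\<close>, of _ "?LO ** ?LO - lam *\<^sub>R ?LO"])
      (simp add: mat4_entry_simps gen_o_def algebra_simps, intro closure)
  show d: "E 2 2 + E 3 3 \<in> G"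
    by (rule subspace_scale_cancel[OF sub lam(1), of _ "?LO - E 1 1"])
      (simp add: mat4_entry_simps gen_o_def algebra_simps, intro closure e11)
  show "E 2 1 \<in> G"
    by (rule subspace_scale_cancel[OF sub lam(1), of _ "?LA ** E 1 1"])
      (simp add: mat4_entry_simps gen_a_def algebra_simps, intro closure e11)
  show e31: "E 3 1 \<in> G"
    by (rule subspace_scale_cancel[OF sub lam(1), of _ "?LB ** E 1 1"])
      (simp add: mat4_entry_simps gen_b_def algebra_simps, intro closure e11)
  show e43: "E 4 3 \<in> G"
    by (rule subspace_scale_cancel[OF sub one_neq_zero, of _ "?LA - (E 2 2 + E 3 3) ** ?LA"])
      (simp add: mat4_entry_simps gen_a_def algebra_simps, intro closure d)
  show "E 4 2 \<in> G"
    by (rule subspace_scale_cancel[OF sub one_neq_zero, of _ "?LB - (E 2 2 + E 3 3) ** ?LB"])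
      (simp add: mat4_entry_simps gen_b_def algebra_simps, intro closure d)
  show "E 4 1 \<in> G"
    using mul[OF e43 e31] by (simp add: E_mult)
  show "(1 - q) *\<^sub>R E 2 2 + p *\<^sub>R E 2 3 \<in> G"
    by (rule subspace_scale_cancel[OF sub one_neq_zero,
          of _ "(E 2 2 + E 3 3) ** ?LA ** (E 2 2 + E 3 3) - q *\<^sub>R (E 2 2 + E 3 3)"])
      (simp add: mat4_entry_simps gen_a_def algebra_simps, intro closure d)
  show "q *\<^sub>R E 3 2 + (1 - p) *\<^sub>R E 3 3 \<in> G"
    by (rule subspace_scale_cancel[OF sub one_neq_zero,
          of _ "(E 2 2 + E 3 3) ** ?LB ** (E 2 2 + E 3 3) - p *\<^sub>R (E 2 2 + E 3 3)"])
      (simp add: mat4_entry_simps gen_b_def algebra_simps, intro closure d)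
qed

text \<open>Step (1b): separating the middle block.  For u = a E22 + p E23 and v = q E32 + b E33
  one has b u - u v = (a b - p q) E22; then E33 = D - E22 and the off-diagonal units are
  read off from u and v.\<close>

lemma middle_units_mem:
  assumes alg: "mat_algebra G"
    and d: "E 2 2 + E 3 3 \<in> G"
    and u: "a *\<^sub>R E 2 2 + p *\<^sub>R E 2 3 \<in> G" and v: "q *\<^sub>R E 3 2 + b *\<^sub>R E 3 3 \<in> G"
    and det: "a * b - p * q \<noteq> 0"
  shows "E 2 2 \<in> G" "E 3 3 \<in> G" "p \<noteq> 0 \<Longrightarrow> E 2 3 \<in> G" "q \<noteq> 0 \<Longrightarrow> E 3 2 \<in> G"
proof -
  note sub = mat_algebraD(1)[OF alg] and mul = mat_algebraD(2)[OF alg]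
  note closure = subspace_scale subspace_diff mul sub
  show e22: "E 2 2 \<in> G"
    by (rule subspace_scale_cancel[OF sub det,
          of _ "b *\<^sub>R (a *\<^sub>R E 2 2 + p *\<^sub>R E 2 3) - (a *\<^sub>R E 2 2 + p *\<^sub>R E 2 3) ** (q *\<^sub>R E 3 2 + b *\<^sub>R E 3 3)"])
      (simp add: mat4_entry_simps algebra_simps, intro closure u v)
  show e33: "E 3 3 \<in> G"
    using subspace_diff[OF sub d e22] by simp
  show "E 2 3 \<in> G" if "p \<noteq> 0"
    by (rule subspace_scale_cancel[OF sub that, of _ "(a *\<^sub>R E 2 2 + p *\<^sub>R E 2 3) - a *\<^sub>R E 2 2"])
      (simp, intro closure u e22)
  show "E 3 2 \<in> G" if "q \<noteq> 0"
    by (rule subspace_scale_cancel[OF sub that, of _ "(q *\<^sub>R E 3 2 + b *\<^sub>R E 3 3) - b *\<^sub>R E 3 3"])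
      (simp, intro closure v e33)
qed

lemma units_subset_alg:
  assumes alg: "mat_algebra G"
    and gens: "gen_o lam \<in> G" "gen_a lam p q \<in> G" "gen_b lam p q \<in> G"
    and lam: "lam \<noteq> 0" "lam \<noteq> 1" and pq: "p + q \<noteq> 1"
  shows "units p q \<subseteq> G"
proof -
  note outer = outer_units_mem[OF alg gens lam]
  have "(1 - q) * (1 - p) - p * q \<noteq> 0" using pq by (simp add: algebra_simps)
  note middle = middle_units_mem[OF alg outer(7-9) this]
  show ?thesis using outer(1-6) middle by (auto simp: units_def outer_units_def)
qed

lemma generators_in_span_units:
  "{gen_o lam, gen_a lam p q, gen_b lam p q} \<subseteq> span (units p q)"
  by (cases "p = 0"; cases "q = 0")
    (simp_all add: gen_o_def gen_a_def gen_b_def units_def outer_units_def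
      span_base span_add span_scale span_zero)

lemma units_mult_closed:
  "b \<in> units p q \<Longrightarrow> c \<in> units p q \<Longrightarrow> b ** c \<in> span (units p q)"
  by (cases "p = 0"; cases "q = 0")
    (auto simp: units_def outer_units_def E_mult span_base span_zero)

lemma gen_alg_generators:
  assumes "lam \<noteq> 0" "lam \<noteq> 1" "p + q \<noteq> 1"
  shows "gen_alg {gen_o lam, gen_a lam p q, gen_b lam p q} = span (units p q)"
    (is "gen_alg ?S = _")
proof (rule gen_alg_eq_span)
  have "?S \<subseteq> gen_alg ?S" by (rule gen_alg_superset)
  then show "units p q \<subseteq> gen_alg ?S"
    by (intro units_subset_alg[OF gen_alg_mat_algebra _ _ _ assms]) simp_all
qed (fact generators_in_span_units, fact units_mult_closed)

theorem mainTheorem8: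
  fixes lam bet :: real
  assumes "0 < lam" "lam < 1" "0 < bet" "bet < 1"
  defines "\<A> \<equiv> gen_alg {l_o lam bet, l_a lam bet, l_b lam bet}"
  shows "(lam = 1/2 \<and> bet = 1/2 \<longrightarrow> \<A> = M0)
       \<and> (lam \<noteq> bet \<and> lam = 1 - bet \<longrightarrow> \<A> = M1)
       \<and> (lam = bet \<and> lam \<noteq> 1 - bet \<longrightarrow> \<A> = M2)
       \<and> (lam \<noteq> bet \<and> lam \<noteq> 1 - bet \<longrightarrow> \<A> = M3)"
proof -
  define p where "p = (lam - bet) / lam"
  define q where "q = (lam + bet - 1) / lam"
  have "l_o lam bet = gen_o lam" "l_a lam bet = gen_a lam p q" "l_b lam bet = gen_b lam p q"
    by (simp_all add: l_o_def l_a_def l_b_def gen_o_def gen_a_def gen_b_def p_def q_def)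
  moreover have "p + q \<noteq> 1" (* p + q = 2 - 1/lam *)
    using assms by (simp add: p_def q_def field_simps)
  ultimately have A: "\<A> = span (units p q)"
    using assms gen_alg_generators[of lam p q] by simp
  have p0: "p = 0 \<longleftrightarrow> lam = bet" using assms by (simp add: p_def field_simps)
  have q0: "q = 0 \<longleftrightarrow> lam = 1 - bet" using assms by (auto simp: q_def field_simps)
  show ?thesis
    unfolding A M0_def M1_def M2_def M3_def units_def outer_units_def p0 q0
    by (simp add: insert_commute)
qed

end
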